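(* Let $F$ be a field and let $G,H$ be unital associative $F$-algebras such that $[g_1,g_2,g_3]=0$ for all $g_i\in G$ and $[h_1,h_2,h_3]=0$ for all $h_j\in H$. Let $m',n'\ge 1$ be integers and let $g_i,g'_i\in G$, $h_j,h'_j\in H$. In $G\otimes_F H$ put $v_1=g_1\otimes 1$, $v_i=g_i\otimes h_i$ for $i=2,\dots,2m'-1$, $v_{2m'}=g_{2m'}\otimes 1$, and $w_1=g'_1\otimes 1$, $w_j=g'_j\otimes h'_j$ for $j=2,\dots,2n'+1$. Then \[ [v_1,\dots,v_{2m'}]=[g_1,g_2][g_3,g_4]\cdots[g_{2m'-1},g_{2m'}]\otimes [h_2,h_3][h_4,h_5]\cdots[h_{2m'-2},h_{2m'-1}], \] \[ [w_1,\dots,w_{2n'+1}]=[g'_1,g'_2]\cdots[g'_{2n'-1},g'_{2n'}]\,g'_{2n'+1}\otimes [h'_2,h'_3][h'_4,h'_5]\cdots[h'_{2n'},h'_{2n'+1}], \] where an empty product of commutators equals $1$.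
   Context: Left-normed commutators: $[a_1,a_2]=a_1a_2-a_2a_1$, $[a_1,\dots,a_{n-1},a_n]=[[a_1,\dots,a_{n-1}],a_n]$ for $n\ge 3$. $G\otimes_F H$ is the tensor product algebra with $(g\otimes h)(g'\otimes h')=gg'\otimes hh'$. *)

theory Defs
  imports Main "HOL-Analysis.Analysis"
begin

definition rcomm :: "'a::ring \<Rightarrow> 'a \<Rightarrow> 'a" where
  "rcomm a b = a * b - b * a"

definition is_algebra :: "('f::field \<Rightarrow> 'g::ring_1 \<Rightarrow> 'g) \<Rightarrow> bool" where
  "is_algebra sc \<longleftrightarrow> Vector_Spaces.vector_space sc \<and>
     (\<forall>c x y. sc c (x * y) = sc c x * y \<and> sc c (x * y) = x * sc c y)"

text \<open>The tensor product G \<otimes>_F H is realised as the quotient of the free F-vector space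
  on G \<times> H (finitely supported functions G \<times> H \<Rightarrow> F) by the subspace spanned by the
  bilinearity relations.  The algebra structure comes from the bilinear extension of
  (g,h)(g',h') = (gg',hh'), i.e. convolution; the bilinearity subspace is an ideal,
  and the product on the quotient is the induced one.  Equality in G \<otimes>_F H of the
  classes of two elements p, q is congruence of p and q modulo that subspace.\<close>

definition fsupp :: "('x \<Rightarrow> 'f::zero) \<Rightarrow> 'x set" where
  "fsupp p = {x. p x \<noteq> 0}"

definition free_vs :: "('x \<Rightarrow> 'f::zero) set" where
  "free_vs = {p. finite (fsupp p)}"

definition delta :: "'x \<Rightarrow> 'x \<Rightarrow> 'f::{zero,one}" where
  "delta a = (\<lambda>x. if x = a then 1 else 0)"

definition tens :: "'g \<Rightarrow> 'h \<Rightarrow> ('g \<times> 'h \<Rightarrow> 'f::{zero,one})" where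
  "tens g h = delta (g, h)"

definition fadd :: "('x \<Rightarrow> 'f::field) \<Rightarrow> ('x \<Rightarrow> 'f) \<Rightarrow> ('x \<Rightarrow> 'f)" where
  "fadd p q = (\<lambda>x. p x + q x)"

definition fsub :: "('x \<Rightarrow> 'f::field) \<Rightarrow> ('x \<Rightarrow> 'f) \<Rightarrow> ('x \<Rightarrow> 'f)" where
  "fsub p q = (\<lambda>x. p x - q x)"

definition fscale :: "'f::field \<Rightarrow> ('x \<Rightarrow> 'f) \<Rightarrow> ('x \<Rightarrow> 'f)" where
  "fscale c p = (\<lambda>x. c * p x)"

definition tmult :: "('g::ring_1 \<times> 'h::ring_1 \<Rightarrow> 'f::field) \<Rightarrow> ('g \<times> 'h \<Rightarrow> 'f) \<Rightarrow> ('g \<times> 'h \<Rightarrow> 'f)" where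
  "tmult p q = (\<lambda>z. \<Sum>(x, y) \<in> {(x, y). x \<in> fsupp p \<and> y \<in> fsupp q \<and>
                     (fst x * fst y, snd x * snd y) = z}. p x * q y)"

definition tcomm :: "('g::ring_1 \<times> 'h::ring_1 \<Rightarrow> 'f::field) \<Rightarrow> ('g \<times> 'h \<Rightarrow> 'f) \<Rightarrow> ('g \<times> 'h \<Rightarrow> 'f)" where
  "tcomm p q = fsub (tmult p q) (tmult q p)"

definition tlcomm :: "('g::ring_1 \<times> 'h::ring_1 \<Rightarrow> 'f::field) list \<Rightarrow> ('g \<times> 'h \<Rightarrow> 'f)" where
  "tlcomm xs = foldl tcomm (hd xs) (tl xs)"

definition tens_rels :: "('f::field \<Rightarrow> 'g::ring_1 \<Rightarrow> 'g) \<Rightarrow> ('f \<Rightarrow> 'h::ring_1 \<Rightarrow> 'h)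
    \<Rightarrow> ('g \<times> 'h \<Rightarrow> 'f) set" where
  "tens_rels sG sH =
     {fsub (tens (g + g') h) (fadd (tens g h) (tens g' h)) | g g' h. True} \<union>
     {fsub (tens g (h + h')) (fadd (tens g h) (tens g h')) | g h h'. True} \<union>
     {fsub (tens (sG c g) h) (fscale c (tens g h)) | c g h. True} \<union>
     {fsub (tens g (sH c h)) (fscale c (tens g h)) | c g h. True}"

definition tens_null :: "('f::field \<Rightarrow> 'g::ring_1 \<Rightarrow> 'g) \<Rightarrow> ('f \<Rightarrow> 'h::ring_1 \<Rightarrow> 'h)
    \<Rightarrow> ('g \<times> 'h \<Rightarrow> 'f) set" where
  "tens_null sG sH = {(\<lambda>x. \<Sum>a\<in>t. r a * a x) | t r. finite t \<and> t \<subseteq> tens_rels sG sH}"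

definition tens_eq :: "('f::field \<Rightarrow> 'g::ring_1 \<Rightarrow> 'g) \<Rightarrow> ('f \<Rightarrow> 'h::ring_1 \<Rightarrow> 'h)
    \<Rightarrow> ('g \<times> 'h \<Rightarrow> 'f) \<Rightarrow> ('g \<times> 'h \<Rightarrow> 'f) \<Rightarrow> bool" where
  "tens_eq sG sH p q \<longleftrightarrow> fsub p q \<in> tens_null sG sH"

end

theory Submission
  imports Defs "HOL-Library.Function_Algebras"
begin

(* In G \<otimes> H the commutator [X \<otimes> Y, c \<otimes> d] equals Xc \<otimes> Yd - cX \<otimes> dY.
  Because [[a, b], c] = 0, commutators are central in G and in H.  Write the partial
  commutator [v_1, \<dots>, v_k] as a simple tensor X \<otimes> Y, with X a product of commutators
  (times g_k when k is odd) and Y a product of commutators (times h_k when k is even).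
  In each step one of X, Y commutes with the new entry, so the difference collapses to the
  simple tensor [X, c] \<otimes> Yd or Xc \<otimes> [Y, d]: new commutators appear alternately on the
  G side and on the H side, and v_1 having H-component 1 starts the induction.

  Multiplication by a simple tensor is the pushforward
  along a pair of F-linear maps G \<rightarrow> G, H \<rightarrow> H, and such pushforwards map bilinearity
  relations to bilinearity relations, so the computation respects the congruence. *)

section \<open>Finitely supported functions\<close>

lemma fadd_eq_plus: "fadd p q = p + q"
  unfolding fadd_def by auto

lemma fsub_eq_minus: "fsub p q = p - q"
  unfolding fsub_def by auto

interpretation fscale: module "fscale :: 'f::field \<Rightarrow> ('x \<Rightarrow> 'f) \<Rightarrow> 'x \<Rightarrow> 'f"
  by standard (auto simp: fscale_def fun_eq_iff algebra_simps)

lemma sum_fun_apply: "(\<Sum>a\<in>t. F a) x = (\<Sum>a\<in>t. F a x)"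
  by (induction t rule: infinite_finite_induct) auto

lemma tens_null_eq_span: "tens_null sG sH = fscale.span (tens_rels sG sH)"
  unfolding tens_null_def fscale.span_explicit by (simp add: fun_eq_iff sum_fun_apply fscale_def)

lemma fsupp_add: "fsupp (p + q :: 'x \<Rightarrow> 'f::monoid_add) \<subseteq> fsupp p \<union> fsupp q"
  unfolding fsupp_def by auto

lemma subspace_free_vs: "fscale.subspace (free_vs :: ('x \<Rightarrow> 'f::field) set)"
proof -
  have "finite (fsupp (0 :: 'x \<Rightarrow> 'f))"
    unfolding fsupp_def by simp
  moreover have "finite (fsupp (p + q))" if "finite (fsupp p)" "finite (fsupp q)" for p q :: "'x \<Rightarrow> 'f"
    using that fsupp_add by (meson finite_UnI finite_subset)
  moreover have "finite (fsupp (fscale c p))" if "finite (fsupp p)" for c and p :: "'x \<Rightarrow> 'f"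
    using that unfolding fsupp_def fscale_def by (simp add: Collect_mono_iff finite_subset)
  ultimately show ?thesis
    unfolding fscale.subspace_def free_vs_def by blast
qed

lemmas free_vs_closed =
  fscale.subspace_add[OF subspace_free_vs] fscale.subspace_diff[OF subspace_free_vs]
  fscale.subspace_scale[OF subspace_free_vs]

lemma tens_in_free_vs [simp]: "(tens g h :: _ \<Rightarrow> 'f::zero_neq_one) \<in> free_vs"
  unfolding free_vs_def fsupp_def tens_def delta_def by simp

lemma tens_rels_subset_free_vs: "tens_rels sG sH \<subseteq> free_vs"
  unfolding tens_rels_def
  by (auto simp: fadd_eq_plus fsub_eq_minus intro!: free_vs_closed)

lemma tens_null_subset_free_vs: "tens_null sG sH \<subseteq> free_vs"
  unfolding tens_null_eq_span by (rule fscale.span_minimal[OF tens_rels_subset_free_vs subspace_free_vs])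

(* Only meaningful on free_vs: an infinite fibre makes the sum 0. *)

definition pushforward :: "('x \<Rightarrow> 'y) \<Rightarrow> ('x \<Rightarrow> 'f::field) \<Rightarrow> 'y \<Rightarrow> 'f" where
  "pushforward f p = (\<lambda>z. \<Sum>x \<in> {x \<in> fsupp p. f x = z}. p x)"

lemma pushforward_eq_sum:
  assumes "finite S" "fsupp p \<subseteq> S"
  shows "pushforward f p z = (\<Sum>x \<in> {x \<in> S. f x = z}. p x)"
  unfolding pushforward_def
  by (rule sum.mono_neutral_left) (use assms in \<open>auto simp: fsupp_def\<close>)

lemma pushforward_tens: "pushforward (map_prod \<phi> \<psi>) (tens g h :: _ \<Rightarrow> 'f::field) = tens (\<phi> g) (\<psi> h)"
proof
  fix z
  have "{x \<in> fsupp (tens g h :: _ \<Rightarrow> 'f). map_prod \<phi> \<psi> x = z}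
      = (if z = (\<phi> g, \<psi> h) then {(g, h)} else {})"
    unfolding fsupp_def tens_def delta_def by auto
  then show "pushforward (map_prod \<phi> \<psi>) (tens g h :: _ \<Rightarrow> 'f) z = tens (\<phi> g) (\<psi> h) z"
    unfolding pushforward_def by (simp add: tens_def delta_def)
qed

lemma pushforward_zero: "pushforward f (0 :: _ \<Rightarrow> 'f::field) = 0"
  unfolding pushforward_def fsupp_def by auto

lemma pushforward_add:
  assumes "p \<in> free_vs" "q \<in> free_vs"
  shows "pushforward f (p + q) = pushforward f p + pushforward f q"
proof
  fix z
  let ?S = "fsupp p \<union> fsupp q"
  have fin: "finite ?S"
    using assms unfolding free_vs_def by simp
  have "pushforward f (p + q) z = (\<Sum>x \<in> {x \<in> ?S. f x = z}. p x + q x)"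
    using pushforward_eq_sum[OF fin fsupp_add] by simp
  also have "\<dots> = pushforward f p z + pushforward f q z"
    by (simp add: sum.distrib pushforward_eq_sum[OF fin])
  finally show "pushforward f (p + q) z = (pushforward f p + pushforward f q) z"
    by simp
qed

lemma pushforward_scale:
  assumes "p \<in> free_vs"
  shows "pushforward f (fscale c p) = fscale c (pushforward f p)"
proof
  fix z
  have fin: "finite (fsupp p)"
    using assms unfolding free_vs_def by simp
  have "fsupp (fscale c p) \<subseteq> fsupp p"
    unfolding fsupp_def fscale_def by auto
  then show "pushforward f (fscale c p) z = fscale c (pushforward f p) z"
    by (simp add: pushforward_eq_sum[OF fin] fscale_def sum_distrib_left)
qed

lemma pushforward_diff:
  assumes "p \<in> free_vs" "q \<in> free_vs"
  shows "pushforward f (p - q) = pushforward f p - pushforward f q"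
proof -
  have "p - q \<in> free_vs"
    using assms by (rule fscale.subspace_diff[OF subspace_free_vs])
  then have "pushforward f (p - q) + pushforward f q = pushforward f p"
    using pushforward_add[OF _ assms(2)] by (metis diff_add_cancel)
  then show ?thesis
    by (simp add: eq_diff_eq)
qed

section \<open>The congruence defining the tensor product\<close>

lemma tens_rels_intros:
  "tens (g + g') h - (tens g h + tens g' h) \<in> tens_rels sG sH"
  "tens g (h + h') - (tens g h + tens g h') \<in> tens_rels sG sH"
  "tens (sG c g) h - fscale c (tens g h) \<in> tens_rels sG sH"
  "tens g (sH c h) - fscale c (tens g h) \<in> tens_rels sG sH"
  unfolding tens_rels_def fsub_eq_minus fadd_eq_plus by blast+

lemma pushforward_tens_rels:
  assumes "Vector_Spaces.linear sG sG \<phi>" "Vector_Spaces.linear sH sH \<psi>"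
    and "a \<in> tens_rels sG sH"
  shows "pushforward (map_prod \<phi> \<psi>) a \<in> tens_rels sG sH"
proof -
  have linear_eqs: "\<phi> (u + v) = \<phi> u + \<phi> v" "\<phi> (sG c u) = sG c (\<phi> u)"
    "\<psi> (u' + v') = \<psi> u' + \<psi> v'" "\<psi> (sH c u') = sH c (\<psi> u')" for c u v u' v'
    using assms(1,2) unfolding Vector_Spaces.linear_iff by blast+
  from assms(3)[unfolded tens_rels_def fsub_eq_minus fadd_eq_plus] show ?thesis
    by (elim UnE CollectE exE conjE)
      (simp_all add: pushforward_diff pushforward_add pushforward_scale pushforward_tens free_vs_closed
        linear_eqs tens_rels_intros)
qed

lemma pushforward_tens_null:
  assumes "Vector_Spaces.linear sG sG \<phi>" "Vector_Spaces.linear sH sH \<psi>"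
    and "p \<in> tens_null sG sH"
  shows "pushforward (map_prod \<phi> \<psi>) p \<in> tens_null sG sH"
proof -
  let ?N = "fscale.span (tens_rels sG sH)"
  have "?N \<subseteq> {p \<in> free_vs. pushforward (map_prod \<phi> \<psi>) p \<in> ?N}"
  proof (rule fscale.span_minimal)
    show "tens_rels sG sH \<subseteq> {p \<in> free_vs. pushforward (map_prod \<phi> \<psi>) p \<in> ?N}"
      using tens_rels_subset_free_vs pushforward_tens_rels[OF assms(1,2)] fscale.span_base by blast
    show "fscale.subspace {p \<in> free_vs. pushforward (map_prod \<phi> \<psi>) p \<in> ?N}"
      unfolding fscale.subspace_def
      by (simp add: free_vs_closed fscale.subspace_0[OF subspace_free_vs] pushforward_zero
          pushforward_add pushforward_scale fscale.span_zero fscale.span_add fscale.span_scale)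
  qed
  then show ?thesis
    using assms(3) unfolding tens_null_eq_span by blast
qed

lemma tens_eq_iff: "tens_eq sG sH p q \<longleftrightarrow> p - q \<in> fscale.span (tens_rels sG sH)"
  unfolding tens_eq_def fsub_eq_minus tens_null_eq_span ..

lemma tens_eq_refl: "tens_eq sG sH p p"
  unfolding tens_eq_iff by (simp add: fscale.span_zero)

lemma tens_eq_trans [trans]: "tens_eq sG sH p q \<Longrightarrow> tens_eq sG sH q r \<Longrightarrow> tens_eq sG sH p r"
  unfolding tens_eq_iff using fscale.span_add[of "p - q" _ "q - r"] by simp

lemma tens_eq_diff:
  "tens_eq sG sH p p' \<Longrightarrow> tens_eq sG sH q q' \<Longrightarrow> tens_eq sG sH (p - q) (p' - q')"
  unfolding tens_eq_iff using fscale.span_diff[of "p - p'" _ "q - q'"] by (simp add: algebra_simps)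

lemma tens_eq_free_vs: "tens_eq sG sH p q \<Longrightarrow> q \<in> free_vs \<Longrightarrow> p \<in> free_vs"
  using tens_null_subset_free_vs unfolding tens_eq_def fsub_eq_minus
  by (metis diff_add_cancel free_vs_closed(1) subsetD)

lemma tens_eq_pushforward:
  assumes "Vector_Spaces.linear sG sG \<phi>" "Vector_Spaces.linear sH sH \<psi>"
    and "tens_eq sG sH p q" "q \<in> free_vs"
  shows "tens_eq sG sH (pushforward (map_prod \<phi> \<psi>) p) (pushforward (map_prod \<phi> \<psi>) q)"
  using pushforward_tens_null[OF assms(1,2) assms(3)[unfolded tens_eq_def fsub_eq_minus]]
  unfolding tens_eq_def fsub_eq_minus pushforward_diff[OF tens_eq_free_vs[OF assms(3,4)] assms(4)] .

lemma tens_eq_tens_diff_left: "tens_eq sG sH (tens X Y - tens X' Y) (tens (X - X') Y)"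
  using fscale.span_base[OF tens_rels_intros(1)[of "X - X'" X' Y]]
  by (simp add: tens_eq_iff diff_diff_eq add.commute)

lemma tens_eq_tens_diff_right: "tens_eq sG sH (tens X Y - tens X Y') (tens X (Y - Y'))"
  using fscale.span_base[OF tens_rels_intros(2)[of X "Y - Y'" Y']]
  by (simp add: tens_eq_iff diff_diff_eq add.commute)

section \<open>Commutators with simple tensors\<close>

lemma tmult_tens_right:
  "tmult p (tens c d :: 'g::ring_1 \<times> 'h::ring_1 \<Rightarrow> 'f::field)
     = pushforward (map_prod (\<lambda>x. x * c) (\<lambda>y. y * d)) p"
proof
  fix z
  have "{(x, y). x \<in> fsupp p \<and> y \<in> fsupp (tens c d :: _ \<Rightarrow> 'f) \<and> (fst x * fst y, snd x * snd y) = z}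
      = (\<lambda>x. (x, (c, d))) ` {x \<in> fsupp p. map_prod (\<lambda>x. x * c) (\<lambda>y. y * d) x = z}"
    by (auto simp: fsupp_def tens_def delta_def)
  then show "tmult p (tens c d) z = pushforward (map_prod (\<lambda>x. x * c) (\<lambda>y. y * d)) p z"
    unfolding tmult_def pushforward_def by (simp add: sum.reindex inj_on_def tens_def delta_def)
qed

lemma tmult_tens_left:
  "tmult (tens c d :: 'g::ring_1 \<times> 'h::ring_1 \<Rightarrow> 'f::field) p
     = pushforward (map_prod (\<lambda>x. c * x) (\<lambda>y. d * y)) p"
proof
  fix z
  have "{(x, y). x \<in> fsupp (tens c d :: _ \<Rightarrow> 'f) \<and> y \<in> fsupp p \<and> (fst x * fst y, snd x * snd y) = z}
      = (\<lambda>y. ((c, d), y)) ` {y \<in> fsupp p. map_prod (\<lambda>x. c * x) (\<lambda>y. d * y) y = z}"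
    by (auto simp: fsupp_def tens_def delta_def split: if_split_asm)
  then show "tmult (tens c d) p z = pushforward (map_prod (\<lambda>x. c * x) (\<lambda>y. d * y)) p z"
    unfolding tmult_def pushforward_def by (simp add: sum.reindex inj_on_def tens_def delta_def)
qed

lemma tcomm_tens_tens: "tcomm (tens X Y) (tens c d) = tens (X * c) (Y * d) - tens (c * X) (d * Y)"
  unfolding tcomm_def fsub_eq_minus tmult_tens_right tmult_tens_left pushforward_tens by simp

lemma linear_mult_right: "is_algebra s \<Longrightarrow> Vector_Spaces.linear s s (\<lambda>x. x * c)"
  unfolding is_algebra_def Vector_Spaces.linear_iff by (simp add: distrib_right)

lemma linear_mult_left: "is_algebra s \<Longrightarrow> Vector_Spaces.linear s s (\<lambda>x. c * x)"
  unfolding is_algebra_def Vector_Spaces.linear_iff by (metis distrib_left)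

lemma tens_eq_tcomm_tens:
  assumes "is_algebra sG" "is_algebra sH" "tens_eq sG sH p q" "q \<in> free_vs"
  shows "tens_eq sG sH (tcomm p (tens c d)) (tcomm q (tens c d))"
  unfolding tcomm_def fsub_eq_minus tmult_tens_right tmult_tens_left
  by (intro tens_eq_diff tens_eq_pushforward linear_mult_right linear_mult_left assms)

lemma tens_eq_tcomm_tens_rcomm_left:
  "Y * d = d * Y \<Longrightarrow> tens_eq sG sH (tcomm (tens X Y) (tens c d)) (tens (rcomm X c) (Y * d))"
  unfolding tcomm_tens_tens rcomm_def by (simp add: tens_eq_tens_diff_left)

lemma tens_eq_tcomm_tens_rcomm_right:
  "X * c = c * X \<Longrightarrow> tens_eq sG sH (tcomm (tens X Y) (tens c d)) (tens (X * c) (rcomm Y d))"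
  unfolding tcomm_tens_tens rcomm_def by (simp add: tens_eq_tens_diff_right)

lemma tlcomm_snoc: "xs \<noteq> [] \<Longrightarrow> tlcomm (xs @ [x]) = tcomm (tlcomm xs) x"
  unfolding tlcomm_def by (cases xs) auto

lemma tens_eq_tlcomm_snoc:
  assumes "is_algebra sG" "is_algebra sH" "xs \<noteq> []" "tens_eq sG sH (tlcomm xs) (tens X Y)"
  shows "tens_eq sG sH (tlcomm (xs @ [tens c d])) (tcomm (tens X Y) (tens c d))"
  unfolding tlcomm_snoc[OF assms(3)] by (rule tens_eq_tcomm_tens[OF assms(1,2,4) tens_in_free_vs])

section \<open>Products of commutators\<close>

lemma rcomm_central:
  fixes x y z :: "'a::ring"
  assumes "\<forall>a b c :: 'a. rcomm (rcomm a b) c = 0"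
  shows "rcomm x y * z = z * rcomm x y"
  using assms[rule_format, of x y z] unfolding rcomm_def[of "rcomm x y" z] by (simp add: right_minus_eq)

lemma rcomm_mult_left_commuting: "P * c = c * P \<Longrightarrow> rcomm (P * x) c = P * rcomm x c"
  unfolding rcomm_def by (simp add: algebra_simps flip: mult.assoc)

definition comm_pairs :: "(nat \<Rightarrow> 'a::ring_1) \<Rightarrow> nat \<Rightarrow> nat \<Rightarrow> 'a" where
  "comm_pairs a s j = prod_list (map (\<lambda>k. rcomm (a (s + 2 * k)) (a (s + 2 * k + 1))) [0..<j])"

lemma comm_pairs_0 [simp]: "comm_pairs a s 0 = 1"
  unfolding comm_pairs_def by simp

lemma comm_pairs_Suc: "comm_pairs a s (Suc j) = comm_pairs a s j * rcomm (a (s + 2 * j)) (a (s + 2 * j + 1))"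
  unfolding comm_pairs_def by simp

lemma comm_pairs_cong:
  "(\<And>i. s \<le> i \<Longrightarrow> i < s + 2 * j \<Longrightarrow> a i = a' i) \<Longrightarrow> comm_pairs a s j = comm_pairs a' s j"
  unfolding comm_pairs_def by (intro arg_cong[where f = prod_list] map_cong) auto

lemma comm_pairs_1_eq:
  "comm_pairs a 1 j = prod_list (map (\<lambda>k. rcomm (a (2 * k - 1)) (a (2 * k))) [1..<j + 1])"
proof -
  have "[1..<j + 1] = map Suc [0..<j]"
    by (simp add: map_Suc_upt)
  then show ?thesis
    unfolding comm_pairs_def by (simp add: comp_def)
qed

lemma comm_pairs_2_eq:
  "comm_pairs a 2 j = prod_list (map (\<lambda>k. rcomm (a (2 * k)) (a (2 * k + 1))) [1..<j + 1])"
proof -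
  have "[1..<j + 1] = map Suc [0..<j]"
    by (simp add: map_Suc_upt)
  then show ?thesis
    unfolding comm_pairs_def by (simp add: comp_def algebra_simps)
qed

lemma comm_pairs_central:
  assumes "\<forall>a b c :: 'a::ring_1. rcomm (rcomm a b) c = 0"
  shows "comm_pairs (a :: nat \<Rightarrow> 'a) s j * z = z * comm_pairs a s j"
proof (induction j)
  case (Suc j)
  let ?P = "comm_pairs a s j" and ?r = "rcomm (a (s + 2 * j)) (a (s + 2 * j + 1))"
  have "?P * ?r * z = ?P * z * ?r"
    by (simp add: mult.assoc rcomm_central[OF assms])
  also have "\<dots> = z * (?P * ?r)"
    by (simp add: Suc mult.assoc)
  finally show ?case
    unfolding comm_pairs_Suc .
qed simp

lemma tens_eq_tlcomm_even_step:
  fixes a :: "nat \<Rightarrow> 'g::ring_1" and b :: "nat \<Rightarrow> 'h::ring_1" and sG :: "'f::field \<Rightarrow> 'g \<Rightarrow> 'g"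
  assumes "is_algebra sG" "is_algebra sH"
    and nilG: "\<forall>x y z :: 'g. rcomm (rcomm x y) z = 0"
    and nilH: "\<forall>x y z :: 'h. rcomm (rcomm x y) z = 0"
    and odd: "tens_eq sG sH (tlcomm (map (\<lambda>i. tens (a i) (b i)) [1..<2 * j + 2]))
                (tens (comm_pairs a 1 j * a (2 * j + 1)) (comm_pairs b 2 j))"
  shows "tens_eq sG sH (tlcomm (map (\<lambda>i. tens (a i) (b i)) [1..<2 * j + 3]))
           (tens (comm_pairs a 1 (Suc j)) (comm_pairs b 2 j * b (2 * j + 2)))"
proof -
  let ?P = "comm_pairs a 1 j" and ?Q = "comm_pairs b 2 j"
  have split: "[1..<2 * j + 3] = [1..<2 * j + 2] @ [2 * j + 2]"
    using upt_Suc_append[of 1 "2 * j + 2"] by (simp add: numeral_3_eq_3)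
  have "tens_eq sG sH (tlcomm (map (\<lambda>i. tens (a i) (b i)) [1..<2 * j + 3]))
      (tcomm (tens (?P * a (2 * j + 1)) ?Q) (tens (a (2 * j + 2)) (b (2 * j + 2))))"
    unfolding split map_append list.map by (intro tens_eq_tlcomm_snoc[OF assms(1,2) _ odd]) simp
  also have "tens_eq sG sH \<dots> (tens (rcomm (?P * a (2 * j + 1)) (a (2 * j + 2))) (?Q * b (2 * j + 2)))"
    by (rule tens_eq_tcomm_tens_rcomm_left) (simp add: comm_pairs_central[OF nilH])
  also have "rcomm (?P * a (2 * j + 1)) (a (2 * j + 2)) = comm_pairs a 1 (Suc j)"
    unfolding rcomm_mult_left_commuting[OF comm_pairs_central[OF nilG]] comm_pairs_Suc
    by (simp add: add.commute)
  finally show ?thesis .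
qed

lemma tens_eq_tlcomm_odd_step:
  fixes a :: "nat \<Rightarrow> 'g::ring_1" and b :: "nat \<Rightarrow> 'h::ring_1" and sG :: "'f::field \<Rightarrow> 'g \<Rightarrow> 'g"
  assumes "is_algebra sG" "is_algebra sH"
    and nilG: "\<forall>x y z :: 'g. rcomm (rcomm x y) z = 0"
    and nilH: "\<forall>x y z :: 'h. rcomm (rcomm x y) z = 0"
    and even: "tens_eq sG sH (tlcomm (map (\<lambda>i. tens (a i) (b i)) [1..<2 * j + 3]))
                 (tens (comm_pairs a 1 (Suc j)) (comm_pairs b 2 j * b (2 * j + 2)))"
  shows "tens_eq sG sH (tlcomm (map (\<lambda>i. tens (a i) (b i)) [1..<2 * Suc j + 2]))
           (tens (comm_pairs a 1 (Suc j) * a (2 * Suc j + 1)) (comm_pairs b 2 (Suc j)))"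
proof -
  let ?P = "comm_pairs a 1 (Suc j)" and ?Q = "comm_pairs b 2 j"
  have split: "[1..<2 * Suc j + 2] = [1..<2 * j + 3] @ [2 * j + 3]"
    using upt_Suc_append[of 1 "2 * j + 3"] by (simp add: numeral_3_eq_3)
  have "tens_eq sG sH (tlcomm (map (\<lambda>i. tens (a i) (b i)) [1..<2 * Suc j + 2]))
      (tcomm (tens ?P (?Q * b (2 * j + 2))) (tens (a (2 * j + 3)) (b (2 * j + 3))))"
    unfolding split map_append list.map by (intro tens_eq_tlcomm_snoc[OF assms(1,2) _ even]) simp
  also have "tens_eq sG sH \<dots> (tens (?P * a (2 * j + 3)) (rcomm (?Q * b (2 * j + 2)) (b (2 * j + 3))))"
    by (rule tens_eq_tcomm_tens_rcomm_right) (simp add: comm_pairs_central[OF nilG])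
  also have "rcomm (?Q * b (2 * j + 2)) (b (2 * j + 3)) = comm_pairs b 2 (Suc j)"
    unfolding rcomm_mult_left_commuting[OF comm_pairs_central[OF nilH]] comm_pairs_Suc
    by (simp add: add.commute numeral_3_eq_3)
  also have "2 * j + 3 = 2 * Suc j + 1"
    by simp
  finally show ?thesis .
qed

lemma tens_eq_tlcomm_odd:
  fixes a :: "nat \<Rightarrow> 'g::ring_1" and b :: "nat \<Rightarrow> 'h::ring_1" and sG :: "'f::field \<Rightarrow> 'g \<Rightarrow> 'g"
  assumes "is_algebra sG" "is_algebra sH"
    and "\<forall>x y z :: 'g. rcomm (rcomm x y) z = 0"
    and "\<forall>x y z :: 'h. rcomm (rcomm x y) z = 0"
    and "b 1 = 1"
  shows "tens_eq sG sH (tlcomm (map (\<lambda>i. tens (a i) (b i)) [1..<2 * j + 2]))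
           (tens (comm_pairs a 1 j * a (2 * j + 1)) (comm_pairs b 2 j))"
proof (induction j)
  case 0
  show ?case
    using assms(5) by (simp add: tlcomm_def tens_eq_refl)
next
  case (Suc j)
  show ?case
    by (intro tens_eq_tlcomm_odd_step tens_eq_tlcomm_even_step Suc assms(1-4))
qed

lemma tens_eq_tlcomm_even_length:
  fixes sG :: "'f::field \<Rightarrow> 'g::ring_1 \<Rightarrow> 'g" and sH :: "'f \<Rightarrow> 'h::ring_1 \<Rightarrow> 'h"
  assumes "is_algebra sG" "is_algebra sH"
    and "\<forall>x y z :: 'g. rcomm (rcomm x y) z = 0"
    and "\<forall>x y z :: 'h. rcomm (rcomm x y) z = 0"
    and "m' \<ge> 1"
  shows "tens_eq sG sH
           (tlcomm (map (\<lambda>i. if i = 1 \<or> i = 2 * m' then tens (g i) 1 else tens (g i) (h i))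
                        [1..<2 * m' + 1]))
           (tens (prod_list (map (\<lambda>k. rcomm (g (2 * k - 1)) (g (2 * k))) [1..<m' + 1]))
                 (prod_list (map (\<lambda>k. rcomm (h (2 * k)) (h (2 * k + 1))) [1..<m'])))"
proof -
  obtain j where j: "m' = Suc j"
    using assms(5) by (cases m') auto
  define b where "b i = (if i = 1 \<or> i = 2 * m' then 1 else h i)" for i
  have length: "2 * m' + 1 = 2 * j + 3"
    using j by simp
  have tensors: "map (\<lambda>i. if i = 1 \<or> i = 2 * m' then tens (g i) 1 else tens (g i) (h i)) [1..<2 * m' + 1]
      = map (\<lambda>i. tens (g i) (b i)) [1..<2 * j + 3]"
    unfolding length b_def by (intro map_cong) auto
  have left: "prod_list (map (\<lambda>k. rcomm (g (2 * k - 1)) (g (2 * k))) [1..<m' + 1]) = comm_pairs g 1 (Suc j)"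
    unfolding comm_pairs_1_eq j ..
  have "comm_pairs b 2 j = comm_pairs h 2 j"
    unfolding b_def j by (rule comm_pairs_cong) auto
  then have right: "prod_list (map (\<lambda>k. rcomm (h (2 * k)) (h (2 * k + 1))) [1..<m']) = comm_pairs b 2 j * b (2 * j + 2)"
    unfolding comm_pairs_2_eq j b_def by simp
  show ?thesis
    unfolding tensors left right
    by (intro tens_eq_tlcomm_even_step tens_eq_tlcomm_odd assms(1-4)) (simp add: b_def)
qed

lemma tens_eq_tlcomm_odd_length:
  fixes sG :: "'f::field \<Rightarrow> 'g::ring_1 \<Rightarrow> 'g" and sH :: "'f \<Rightarrow> 'h::ring_1 \<Rightarrow> 'h"
  assumes "is_algebra sG" "is_algebra sH"
    and "\<forall>x y z :: 'g. rcomm (rcomm x y) z = 0"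
    and "\<forall>x y z :: 'h. rcomm (rcomm x y) z = 0"
  shows "tens_eq sG sH
           (tlcomm (map (\<lambda>j. if j = 1 then tens (g' j) 1 else tens (g' j) (h' j))
                        [1..<2 * n' + 2]))
           (tens (prod_list (map (\<lambda>k. rcomm (g' (2 * k - 1)) (g' (2 * k))) [1..<n' + 1])
                    * g' (2 * n' + 1))
                 (prod_list (map (\<lambda>k. rcomm (h' (2 * k)) (h' (2 * k + 1))) [1..<n' + 1])))"
proof -
  define b where "b i = (if i = 1 then 1 else h' i)" for i
  have tensors: "map (\<lambda>j. if j = 1 then tens (g' j) 1 else tens (g' j) (h' j)) [1..<2 * n' + 2]
      = map (\<lambda>i. tens (g' i) (b i)) [1..<2 * n' + 2]"
    unfolding b_def by (intro map_cong) auto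
  have right: "comm_pairs h' 2 n' = comm_pairs b 2 n'"
    unfolding b_def by (rule comm_pairs_cong) auto
  show ?thesis
    unfolding tensors comm_pairs_1_eq[symmetric] comm_pairs_2_eq[symmetric] right
    by (rule tens_eq_tlcomm_odd[OF assms]) (simp add: b_def)
qed

theorem corollary2p3:
  fixes sG :: "'f::field \<Rightarrow> 'g::ring_1 \<Rightarrow> 'g"
    and sH :: "'f \<Rightarrow> 'h::ring_1 \<Rightarrow> 'h"
    and g g' :: "nat \<Rightarrow> 'g" and h h' :: "nat \<Rightarrow> 'h"
    and m' n' :: nat
  assumes algG: "is_algebra sG"
    and algH: "is_algebra sH"
    and nilG: "\<forall>a b c :: 'g. rcomm (rcomm a b) c = 0"
    and nilH: "\<forall>a b c :: 'h. rcomm (rcomm a b) c = 0"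
    and m: "m' \<ge> 1" and n: "n' \<ge> 1"
  shows "tens_eq sG sH
           (tlcomm (map (\<lambda>i. if i = 1 \<or> i = 2 * m' then tens (g i) 1 else tens (g i) (h i))
                        [1..<2 * m' + 1]))
           (tens (prod_list (map (\<lambda>k. rcomm (g (2 * k - 1)) (g (2 * k))) [1..<m' + 1]))
                 (prod_list (map (\<lambda>k. rcomm (h (2 * k)) (h (2 * k + 1))) [1..<m'])))
       \<and> tens_eq sG sH
           (tlcomm (map (\<lambda>j. if j = 1 then tens (g' j) 1 else tens (g' j) (h' j))
                        [1..<2 * n' + 2]))
           (tens (prod_list (map (\<lambda>k. rcomm (g' (2 * k - 1)) (g' (2 * k))) [1..<n' + 1])
                    * g' (2 * n' + 1))
                 (prod_list (map (\<lambda>k. rcomm (h' (2 * k)) (h' (2 * k + 1))) [1..<n' + 1])))"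
  using tens_eq_tlcomm_even_length[OF algG algH nilG nilH m] tens_eq_tlcomm_odd_length[OF algG algH nilG nilH]
  by blast

end
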